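(* Let $k\geq 1$ and let $G$ be a $k$-degenerate graph on $n\geq 1$ vertices. Then $pdim(G) \leq \lceil 8.317\, k \log_2 n\rceil + 1$.
   Context: A graph $G$ is $k$-degenerate if its vertices admit an ordering $v_1,\dots,v_n$ such that each $v_i$ has at most $k$ neighbours among $\{v_j : j<i\}$. For a graph $G=(V,E)$ and $l\in\mathbb{N}$, an $l$-encoding of $G$ is an injective function $\phi: V\to\mathbb{N}^l$ such that for all $u,v\in V$, $\{u,v\}\in E$ if and only if $\phi(u)$ and $\phi(v)$ differ in all $l$ coordinates. The product dimension $pdim(G)$ is the minimum $l$ such that an $l$-encoding of $G$ exists. *)

theory Defs
  imports "HOL-Analysis.Analysis"
begin

definition simple_graph :: "'a set \<Rightarrow> ('a \<Rightarrow> 'a \<Rightarrow> bool) \<Rightarrow> bool" where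
  "simple_graph V E \<longleftrightarrow> finite V \<and> (\<forall>u v. E u v \<longrightarrow> u \<in> V \<and> v \<in> V)
     \<and> (\<forall>u v. E u v \<longrightarrow> E v u) \<and> (\<forall>v. \<not> E v v)"

definition degenerate :: "nat \<Rightarrow> 'a set \<Rightarrow> ('a \<Rightarrow> 'a \<Rightarrow> bool) \<Rightarrow> bool" where
  "degenerate k V E \<longleftrightarrow> (\<exists>vs. distinct vs \<and> set vs = V \<and>
     (\<forall>i < length vs. card {j. j < i \<and> E (vs ! i) (vs ! j)} \<le> k))"

definition encoding :: "nat \<Rightarrow> 'a set \<Rightarrow> ('a \<Rightarrow> 'a \<Rightarrow> bool) \<Rightarrow> ('a \<Rightarrow> nat list) \<Rightarrow> bool" where
  "encoding l V E \<phi> \<longleftrightarrow> (\<forall>v\<in>V. length (\<phi> v) = l) \<and> inj_on \<phi> V \<and>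
     (\<forall>u\<in>V. \<forall>v\<in>V. E u v \<longleftrightarrow> (\<forall>i<l. \<phi> u ! i \<noteq> \<phi> v ! i))"

definition pdim :: "'a set \<Rightarrow> ('a \<Rightarrow> 'a \<Rightarrow> bool) \<Rightarrow> nat" where
  "pdim V E = (LEAST l. \<exists>\<phi>. encoding l V E \<phi>)"

end

theory Submission
  imports Defs "HOL-Probability.Probability"
begin

text \<open>Colour the vertices greedily along a degeneracy ordering, giving each vertex a uniformly random
  colour among the \<open>q \<approx> 7k/2\<close> colours not used by its at most \<open>k\<close> earlier neighbours. Every such
  colouring is proper. Two vertices receive the same colour with probability at most \<open>1 / (q - k)\<close>,
  since the later one chooses among at least \<open>q - k\<close> colours; by the union bound over the earlier
  neighbours of the later vertex, two non-adjacent vertices receive the same colour with probability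
  at least \<open>p = (1 - k / (q - k)) / q\<close>, and \<open>(1 - p)^(8.317 k) < 1/4\<close>. Choosing
  \<open>l \<ge> 8.317 k log\<^sub>2 n\<close> colourings one after another, each time keeping at most the expected
  fraction \<open>1 - p\<close> of the non-adjacent pairs not yet monochromatic, leaves fewer than
  \<open>n\<^sup>2 (1 - p)^l < 1\<close> such pairs. The \<open>l\<close> colourings together with an injective label
  form an \<open>(l + 1)\<close>-encoding: adjacent vertices differ in every colouring and in the label,
  non-adjacent ones agree in some colouring.\<close>

section \<open>Averaging over a probability mass function\<close>

lemma measure_bind_pmf:
  "measure_pmf.prob (bind_pmf M f) X = measure_pmf.expectation M (\<lambda>x. measure_pmf.prob (f x) X)"
  unfolding measure_pmf_bind
  by (rule measure_pmf.measure_bind[where N="count_space UNIV"])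
     (auto intro: measurable_measure_pmf simp: space_subprob_algebra subprob_space_measure_pmf)

lemma exists_le_expectation_pmf:
  fixes f :: "'a \<Rightarrow> real"
  assumes "finite (f ` set_pmf M)"
  shows "\<exists>x\<in>set_pmf M. f x \<le> measure_pmf.expectation M f"
proof -
  obtain x where x: "x \<in> set_pmf M" "f x = Min (f ` set_pmf M)"
    using Min_in[OF assms] set_pmf_not_empty by (metis empty_is_image imageE)
  have "integrable (measure_pmf M) f"
    using assms by (intro measure_pmf.integrable_const_bound[where B="Max (norm ` f ` set_pmf M)"])
      (auto simp: AE_measure_pmf_iff)
  moreover have "AE y in measure_pmf M. f x \<le> f y"
    using assms x by (auto simp: AE_measure_pmf_iff)
  ultimately show ?thesis
    using x(1) measure_pmf.integral_ge_const by blast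
qed

lemma exists_outcome_few_failures:
  fixes A :: "'i \<Rightarrow> 'a set"
  assumes "finite U" and "\<And>i. i \<in> U \<Longrightarrow> p \<le> measure_pmf.prob M (A i)"
  shows "\<exists>x\<in>set_pmf M. real (card {i\<in>U. x \<notin> A i}) \<le> (1 - p) * real (card U)"
proof -
  define f where "f x = real (card {i\<in>U. x \<notin> A i})" for x
  have "f ` set_pmf M \<subseteq> real ` {..card U}"
    using assms(1) by (auto simp: f_def intro!: card_mono)
  then have "finite (f ` set_pmf M)"
    by (rule finite_subset) simp
  then obtain x where x: "x \<in> set_pmf M" "f x \<le> measure_pmf.expectation M f"
    using exists_le_expectation_pmf by blast
  have "f = (\<lambda>x. \<Sum>i\<in>U. indicator (- A i) x)"
    using assms(1) by (auto simp: f_def indicator_def sum.If_cases Int_def)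
  then have "measure_pmf.expectation M f = (\<Sum>i\<in>U. measure_pmf.prob M (- A i))"
    by (simp add: Bochner_Integration.integral_sum measure_pmf.emeasure_eq_measure)
  also have "\<dots> \<le> (\<Sum>i\<in>U. 1 - p)"
    using assms(2) measure_pmf.prob_compl[of _ M]
    by (intro sum_mono) (simp add: Compl_eq_Diff_UNIV)
  finally show ?thesis
    using x by (force simp: f_def mult.commute)
qed

lemma exists_samples_few_failures:
  fixes A :: "'i \<Rightarrow> 'a set"
  assumes "finite U" and "\<And>i. i \<in> U \<Longrightarrow> p \<le> measure_pmf.prob M (A i)" and "p \<le> 1"
  shows "\<exists>xs. length xs = t \<and> set xs \<subseteq> set_pmf M \<and>
           real (card {i\<in>U. \<forall>x\<in>set xs. x \<notin> A i}) \<le> (1 - p) ^ t * real (card U)"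
proof (induction t)
  case 0
  show ?case by simp
next
  case (Suc t)
  then obtain xs where xs: "length xs = t" "set xs \<subseteq> set_pmf M"
    "real (card {i\<in>U. \<forall>x\<in>set xs. x \<notin> A i}) \<le> (1 - p) ^ t * real (card U)"
    by blast
  let ?U = "{i\<in>U. \<forall>x\<in>set xs. x \<notin> A i}"
  obtain x where x: "x \<in> set_pmf M" "real (card {i\<in>?U. x \<notin> A i}) \<le> (1 - p) * real (card ?U)"
    using exists_outcome_few_failures[of ?U p M A] assms(1,2) by auto
  have "{i\<in>?U. x \<notin> A i} = {i\<in>U. \<forall>y\<in>set (x # xs). y \<notin> A i}"
    by auto
  moreover have "(1 - p) * real (card ?U) \<le> (1 - p) ^ Suc t * real (card U)"
    using xs(3) assms(3) by (simp add: mult_left_mono mult.assoc)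
  ultimately show ?case
    using x xs by (intro exI[of _ "x # xs"]) auto
qed

section \<open>Random greedy colourings\<close>

fun degenerate_list :: "nat \<Rightarrow> ('a \<Rightarrow> 'a \<Rightarrow> bool) \<Rightarrow> 'a list \<Rightarrow> bool" where
  "degenerate_list k E [] \<longleftrightarrow> True"
| "degenerate_list k E (w # ws) \<longleftrightarrow> card {u \<in> set ws. E w u} \<le> k \<and> degenerate_list k E ws"

lemma degenerate_list_rev:
  assumes "\<forall>i < length vs. card {j. j < i \<and> E (vs ! i) (vs ! j)} \<le> k"
  shows "degenerate_list k E (rev vs)"
  using assms
proof (induction vs rule: rev_induct)
  case Nil
  then show ?case by simp
next
  case (snoc x xs)
  have "\<forall>i < length xs. card {j. j < i \<and> E (xs ! i) (xs ! j)} \<le> k"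
  proof (intro allI impI)
    fix i
    assume "i < length xs"
    then have "{j. j < i \<and> E (xs ! i) (xs ! j)} = {j. j < i \<and> E ((xs @ [x]) ! i) ((xs @ [x]) ! j)}"
      by (auto simp: nth_append)
    with snoc.prems \<open>i < length xs\<close> show "card {j. j < i \<and> E (xs ! i) (xs ! j)} \<le> k"
      by simp
  qed
  moreover have "card {u \<in> set xs. E x u} \<le> k"
  proof -
    have "{u \<in> set xs. E x u} = (!) xs ` {j. j < length xs \<and> E x (xs ! j)}"
      by (auto simp: in_set_conv_nth)
    then have "card {u \<in> set xs. E x u} \<le> card {j. j < length xs \<and> E x (xs ! j)}"
      by (simp add: card_image_le)
    also have "{j. j < length xs \<and> E x (xs ! j)}
        = {j. j < length xs \<and> E ((xs @ [x]) ! length xs) ((xs @ [x]) ! j)}"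
      by (auto simp: nth_append)
    also have "card \<dots> \<le> k"
      using snoc.prems[rule_format, of "length xs"] by simp
    finally show ?thesis .
  qed
  ultimately show ?case
    using snoc.IH by simp
qed

lemma degenerate_imp_degenerate_list:
  assumes "degenerate k V E"
  obtains ws where "set ws = V" "degenerate_list k E ws"
  using assms degenerate_list_rev[of _ E k] unfolding degenerate_def by (metis set_rev)

locale greedy_colouring =
  fixes E :: "'a \<Rightarrow> 'a \<Rightarrow> bool" and k q :: nat
  assumes E_sym: "E u v \<Longrightarrow> E v u" and E_irrefl: "\<not> E v v" and k_less_q: "k < q"
begin

definition free_colours :: "('a \<Rightarrow> nat) \<Rightarrow> 'a \<Rightarrow> 'a list \<Rightarrow> nat set" where
  "free_colours c w ws = {0..<q} - c ` {u \<in> set ws. E w u}"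

text \<open>The head of the list is coloured last, after its neighbours in the tail, so a degeneracy
  ordering is read backwards.\<close>
fun random_colouring :: "'a list \<Rightarrow> ('a \<Rightarrow> nat) pmf" where
  "random_colouring [] = return_pmf (\<lambda>_. 0)"
| "random_colouring (w # ws) = bind_pmf (random_colouring ws)
     (\<lambda>c. map_pmf (\<lambda>x. c(w := x)) (pmf_of_set (free_colours c w ws)))"

lemma finite_free_colours [simp]: "finite (free_colours c w ws)"
  by (simp add: free_colours_def)

lemma card_free_colours_le: "card (free_colours c w ws) \<le> q"
  by (metis card_atLeastLessThan card_mono diff_zero Diff_subset finite_atLeastLessThan free_colours_def)

lemma card_free_colours_ge:
  assumes "card {u \<in> set ws. E w u} \<le> k"
  shows "q - k \<le> card (free_colours c w ws)"
proof -
  have "q - k \<le> card {0..<q} - card (c ` {u \<in> set ws. E w u})"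
    using card_image_le[of "{u \<in> set ws. E w u}" c] assms by simp
  also have "\<dots> \<le> card (free_colours c w ws)"
    unfolding free_colours_def by (rule diff_card_le_card_Diff) simp
  finally show ?thesis .
qed

lemma free_colours_nonempty:
  assumes "card {u \<in> set ws. E w u} \<le> k"
  shows "free_colours c w ws \<noteq> {}"
  using card_free_colours_ge[OF assms, of c] k_less_q by auto

lemma set_random_colouring_ConsE:
  assumes "degenerate_list k E (w # ws)" "c \<in> set_pmf (random_colouring (w # ws))"
  obtains c0 x where "c0 \<in> set_pmf (random_colouring ws)" "x \<in> free_colours c0 w ws"
    "c = c0(w := x)"
  using assms free_colours_nonempty by auto

lemma random_colouring_less:
  assumes "degenerate_list k E ws" "c \<in> set_pmf (random_colouring ws)" "u \<in> set ws"
  shows "c u < q"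
  using assms
proof (induction ws arbitrary: c)
  case (Cons w ws)
  then obtain c0 x where "c0 \<in> set_pmf (random_colouring ws)" "x \<in> free_colours c0 w ws"
    "c = c0(w := x)"
    by (meson set_random_colouring_ConsE)
  with Cons show ?case
    by (cases "u = w") (auto simp: free_colours_def)
qed simp

lemma random_colouring_proper:
  assumes "degenerate_list k E ws" "c \<in> set_pmf (random_colouring ws)"
    and "u \<in> set ws" "v \<in> set ws" "E u v"
  shows "c u \<noteq> c v"
  using assms
proof (induction ws arbitrary: c u v)
  case (Cons w ws)
  then obtain c0 x where c0: "c0 \<in> set_pmf (random_colouring ws)" and x: "x \<in> free_colours c0 w ws"
    and c: "c = c0(w := x)"
    by (meson set_random_colouring_ConsE)
  have "u \<noteq> v"
    using Cons.prems(5) E_irrefl by auto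
  then consider "u = w" "v \<in> set ws" | "v = w" "u \<in> set ws" | "u \<noteq> w" "v \<noteq> w"
    using Cons.prems(3,4) by auto
  then show ?case
  proof cases
    case 1
    then show ?thesis using x c Cons.prems(5) \<open>u \<noteq> v\<close> by (auto simp: free_colours_def)
  next
    case 2
    then show ?thesis using x c E_sym[OF Cons.prems(5)] \<open>u \<noteq> v\<close> by (auto simp: free_colours_def)
  next
    case 3
    then show ?thesis using Cons c0 c by auto
  qed
qed simp

lemma collision_prob_Cons_old:
  assumes "u \<noteq> w" "v \<noteq> w"
  shows "measure_pmf.prob (random_colouring (w # ws)) {c. c u = c v}
       = measure_pmf.prob (random_colouring ws) {c. c u = c v}"
proof -
  have "map_pmf (\<lambda>c. (c u, c v)) (random_colouring (w # ws))
      = map_pmf (\<lambda>c. (c u, c v)) (random_colouring ws)"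
    using assms by (simp add: map_bind_pmf map_pmf_comp map_pmf_def[of _ "random_colouring ws"])
  then have "measure_pmf.prob (map_pmf (\<lambda>c. (c u, c v)) (random_colouring (w # ws))) {p. fst p = snd p}
      = measure_pmf.prob (map_pmf (\<lambda>c. (c u, c v)) (random_colouring ws)) {p. fst p = snd p}"
    by simp
  then show ?thesis
    by (simp add: vimage_def)
qed

lemma collision_prob_Cons_new:
  assumes "v \<noteq> w"
  shows "measure_pmf.prob (random_colouring (w # ws)) {c. c w = c v}
       = measure_pmf.expectation (random_colouring ws)
           (\<lambda>c. pmf (pmf_of_set (free_colours c w ws)) (c v))"
proof -
  have "(\<lambda>x. c(w := x)) -` {c. c w = c v} = {c v}" for c :: "'a \<Rightarrow> nat"
    using assms by auto
  then show ?thesis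
    by (simp add: measure_bind_pmf measure_pmf_single)
qed

lemma collision_prob_Cons_new_le:
  assumes "degenerate_list k E (w # ws)" "v \<noteq> w"
  shows "measure_pmf.prob (random_colouring (w # ws)) {c. c w = c v} \<le> 1 / (real q - real k)"
proof -
  have pmf_le: "pmf (pmf_of_set (free_colours c w ws)) (c v) \<le> 1 / (real q - real k)" for c
  proof -
    have "real q - real k \<le> card (free_colours c w ws)"
      using card_free_colours_ge[of ws w c] assms(1) k_less_q by simp
    then show ?thesis
      using free_colours_nonempty[of ws w c] assms(1) k_less_q
      by (auto simp: indicator_def intro!: divide_left_mono)
  qed
  have "measure_pmf.expectation (random_colouring ws)
          (\<lambda>c. pmf (pmf_of_set (free_colours c w ws)) (c v)) \<le> 1 / (real q - real k)"
    using pmf_le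
    by (intro measure_pmf.integral_le_const measure_pmf.integrable_const_bound[where B=1])
      (auto simp: pmf_le_1)
  then show ?thesis
    using collision_prob_Cons_new[OF assms(2)] by simp
qed

lemma collision_prob_le:
  assumes "degenerate_list k E ws" "u \<in> set ws" "u \<noteq> v"
  shows "measure_pmf.prob (random_colouring ws) {c. c u = c v} \<le> 1 / (real q - real k)"
  using assms
proof (induction ws arbitrary: u v)
  case (Cons w ws)
  consider "u = w" | "v = w" | "u \<noteq> w" "v \<noteq> w"
    by blast
  then show ?case
  proof cases
    case 1
    then show ?thesis
      using Cons.prems collision_prob_Cons_new_le by auto
  next
    case 2
    then have eq: "{c. c u = c v} = {c. c w = c u}"
      by auto
    show ?thesis
      unfolding eq using Cons.prems 2 by (intro collision_prob_Cons_new_le) auto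
  next
    case 3
    then show ?thesis
      using Cons collision_prob_Cons_old by auto
  qed
qed simp

lemma prob_colour_in_image_le:
  assumes "degenerate_list k E ws" "v \<in> set ws" "finite B" "v \<notin> B"
  shows "measure_pmf.prob (random_colouring ws) {c. c v \<in> c ` B} \<le> card B / (real q - real k)"
proof -
  have "measure_pmf.prob (random_colouring ws) {c. c v \<in> c ` B}
      = measure_pmf.prob (random_colouring ws) (\<Union>b\<in>B. {c. c v = c b})"
    by (rule arg_cong[where f="measure_pmf.prob _"]) auto
  also have "\<dots> \<le> (\<Sum>b\<in>B. measure_pmf.prob (random_colouring ws) {c. c v = c b})"
    using assms(3) by (rule measure_pmf.finite_measure_subadditive_finite) auto
  also have "\<dots> \<le> (\<Sum>b\<in>B. 1 / (real q - real k))"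
    using assms by (intro sum_mono collision_prob_le) auto
  finally show ?thesis
    by simp
qed

lemma pmf_free_colours_ge:
  assumes "degenerate_list k E (w # ws)" "c \<in> set_pmf (random_colouring ws)" "v \<in> set ws"
    and "c v \<notin> c ` {u \<in> set ws. E w u}"
  shows "1 / q \<le> pmf (pmf_of_set (free_colours c w ws)) (c v)"
proof -
  have "c v \<in> free_colours c w ws"
    using random_colouring_less[OF _ assms(2,3)] assms(1,4) by (simp add: free_colours_def)
  then have "free_colours c w ws \<noteq> {}" "0 < card (free_colours c w ws)"
    by (auto simp: card_gt_0_iff)
  have "1 / q \<le> 1 / card (free_colours c w ws)"
    using \<open>0 < card (free_colours c w ws)\<close> k_less_q
    by (intro divide_left_mono) (simp_all add: card_free_colours_le)
  also have "\<dots> = pmf (pmf_of_set (free_colours c w ws)) (c v)"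
    using pmf_of_set[OF \<open>free_colours c w ws \<noteq> {}\<close>] \<open>c v \<in> free_colours c w ws\<close> by simp
  finally show ?thesis .
qed

text \<open>The new vertex \<open>w\<close> picks the colour of \<open>v\<close> with probability at least \<open>1 / q\<close> unless that
  colour is taken by a neighbour of \<open>w\<close>; by the union bound and \<open>collision_prob_le\<close> this happens
  with probability at most \<open>k / (q - k)\<close>.\<close>
lemma collision_prob_Cons_new_ge:
  assumes "degenerate_list k E (w # ws)" "v \<in> set ws" "v \<noteq> w" "\<not> E w v"
  shows "(1 - k / (real q - real k)) / q
         \<le> measure_pmf.prob (random_colouring (w # ws)) {c. c w = c v}"
proof -
  let ?D = "random_colouring ws"
  let ?B = "{u \<in> set ws. E w u}"
  define S :: "('a \<Rightarrow> nat) set" where "S = {c. c v \<notin> c ` ?B}"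
  have "1 - k / (real q - real k) \<le> 1 - measure_pmf.prob ?D {c. c v \<in> c ` ?B}"
  proof -
    have "measure_pmf.prob ?D {c. c v \<in> c ` ?B} \<le> card ?B / (real q - real k)"
      using assms by (intro prob_colour_in_image_le) auto
    also have "\<dots> \<le> k / (real q - real k)"
      using assms(1) k_less_q by (intro divide_right_mono) auto
    finally show ?thesis
      by simp
  qed
  also have "\<dots> = measure_pmf.prob ?D S"
    using measure_pmf.prob_compl[of "{c. c v \<in> c ` ?B}" ?D] by (simp add: S_def set_diff_eq)
  finally have "(1 - k / (real q - real k)) / q \<le> measure_pmf.expectation ?D (\<lambda>c. indicator S c / q)"
    by (simp add: divide_right_mono)
  also have "\<dots> \<le> measure_pmf.expectation ?D (\<lambda>c. pmf (pmf_of_set (free_colours c w ws)) (c v))"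
  proof (rule integral_mono_AE)
    show "AE c in measure_pmf ?D. indicator S c / q \<le> pmf (pmf_of_set (free_colours c w ws)) (c v)"
      using pmf_free_colours_ge[OF assms(1) _ assms(2)]
      by (auto simp: AE_measure_pmf_iff S_def indicator_def)
  qed (use k_less_q in
      \<open>auto intro!: measure_pmf.integrable_const_bound[where B=1] simp: pmf_le_1 indicator_def\<close>)
  also have "\<dots> = measure_pmf.prob (random_colouring (w # ws)) {c. c w = c v}"
    using collision_prob_Cons_new[OF assms(3)] by simp
  finally show ?thesis .
qed

lemma collision_prob_ge:
  assumes "degenerate_list k E ws" "u \<in> set ws" "v \<in> set ws" "u \<noteq> v" "\<not> E u v"
  shows "(1 - k / (real q - real k)) / q \<le> measure_pmf.prob (random_colouring ws) {c. c u = c v}"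
  using assms
proof (induction ws arbitrary: u v)
  case (Cons w ws)
  consider "u = w" | "v = w" | "u \<noteq> w" "v \<noteq> w"
    by blast
  then show ?case
  proof cases
    case 1
    then show ?thesis
      using Cons.prems collision_prob_Cons_new_ge by auto
  next
    case 2
    then have eq: "{c. c u = c v} = {c. c w = c u}"
      by auto
    show ?thesis
      unfolding eq using Cons.prems 2 E_sym by (intro collision_prob_Cons_new_ge) auto
  next
    case 3
    then show ?thesis
      using Cons collision_prob_Cons_old by auto
  qed
qed simp

end

section \<open>Numerical estimates\<close>

text \<open>With \<open>q = a k\<close> colours, \<open>k\<close> times the collision bound is about \<open>(a - 2) / (a (a - 1))\<close>,
  which is maximal (\<open>3 - 2\<surd>2 \<approx> 0.1716\<close>) at \<open>a = 2 + \<surd>2\<close>; \<open>a = 7/2\<close> gives at least \<open>0.17\<close>.\<close>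
definition num_colours :: "nat \<Rightarrow> nat" where
  "num_colours k = (7 * k + 1) div 2"

definition collision_bound :: "nat \<Rightarrow> real" where
  "collision_bound k = (1 - k / (real (num_colours k) - k)) / num_colours k"

lemma num_colours_gt: "1 \<le> k \<Longrightarrow> 2 * k < num_colours k"
  unfolding num_colours_def by linarith

lemma collision_bound_eq:
  assumes "1 \<le> k"
  shows "collision_bound k = (num_colours k - 2 * real k) / (num_colours k * (num_colours k - real k))"
proof -
  have "real k < num_colours k"
    using num_colours_gt[OF assms] by linarith
  then show ?thesis
    unfolding collision_bound_def by (simp add: field_simps)
qed

lemma collision_bound_pos: "1 \<le> k \<Longrightarrow> 0 < collision_bound k"
  using num_colours_gt[of k] by (simp add: collision_bound_eq)

lemma collision_bound_less_1:
  assumes "1 \<le> k"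
  shows "collision_bound k < 1"
proof -
  have "1 < real (num_colours k)" "0 \<le> k / (real (num_colours k) - k)"
    using num_colours_gt[OF assms] assms by auto
  then show ?thesis
    unfolding collision_bound_def by (simp add: divide_less_eq)
qed

lemma collision_bound_ge:
  assumes "2 \<le> k"
  shows "0.17 \<le> k * collision_bound k"
proof -
  define Q where "Q = real (num_colours k)"
  have "2 * num_colours k = 7 * k \<or> (3 \<le> k \<and> 2 * num_colours k = 7 * k + 1)"
    unfolding num_colours_def using assms by presburger
  then have "2 * Q = 7 * k \<or> (3 \<le> k \<and> 2 * Q = 7 * k + 1)"
    unfolding Q_def by (metis of_nat_1 of_nat_add of_nat_mult of_nat_numeral of_nat_le_iff)
  then have "17 / 100 * (Q * (Q - k)) \<le> k * (Q - 2 * real k)"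
  proof
    assume "2 * Q = 7 * k"
    then have Q: "Q = 7 / 2 * k"
      by simp
    have "k * (Q - 2 * real k) - 17 / 100 * (Q * (Q - k)) = real k * real k / 80"
      unfolding Q by (simp add: algebra_simps)
    moreover have "0 \<le> real k * real k / 80"
      by simp
    ultimately show ?thesis
      by linarith
  next
    assume k: "3 \<le> k \<and> 2 * Q = 7 * k + 1"
    then have Q: "Q = 7 / 2 * k + 1 / 2"
      by simp
    have "k * (Q - 2 * real k) - 17 / 100 * (Q * (Q - k)) = (5 * (real k * real k) - 4 * real k - 17) / 400"
      unfolding Q by (simp add: algebra_simps)
    moreover have "0 \<le> (5 * (real k * real k) - 4 * real k - 17) / 400"
    proof -
      have "3 \<le> real k" "3 * real k \<le> real k * real k"
        using k by (auto intro: mult_right_mono)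
      then show ?thesis
        by (smt (verit) divide_nonneg_nonneg)
    qed
    ultimately show ?thesis
      by linarith
  qed
  moreover have "0 < Q * (Q - k)"
    unfolding Q_def using num_colours_gt[of k] assms by simp
  ultimately show ?thesis
    using assms by (simp add: collision_bound_eq Q_def[symmetric] le_divide_eq)
qed

lemma exp_neg_141_less: "exp (-1.41 :: real) < 1 / 4"
proof -
  have "1 + 0.3525 + 0.3525\<^sup>2 / 2 \<le> exp (0.3525 :: real)"
    by (rule exp_lower_Taylor_quadratic) simp
  then have "1.41462 ^ 4 \<le> exp (0.3525 :: real) ^ 4"
    by (intro power_mono) (simp_all add: power2_eq_square)
  also have "exp (0.3525 :: real) ^ 4 = exp 1.41"
    by (simp flip: exp_of_nat_mult)
  finally have "1.41462 ^ 4 \<le> exp (1.41 :: real)" .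
  moreover have "4 < (1.41462 :: real) ^ 4"
    by (simp add: numeral_eq_Suc)
  ultimately have "4 < exp (1.41 :: real)"
    by linarith
  then show ?thesis
    by (simp add: exp_minus field_simps)
qed

lemma collision_bound_powr_less:
  assumes "1 \<le> k"
  shows "(1 - collision_bound k) powr (8.317 * k) < 1 / 4"
proof (cases "k = 1")
  case True
  \<comment> \<open>here \<open>1 - p \<le> exp (- p)\<close> is too weak: \<open>8.317 / 6 < ln 4\<close>\<close>
  then have p: "1 - collision_bound k = 5 / 6"
    by (simp add: collision_bound_def num_colours_def)
  have "(1 - collision_bound k) powr (8.317 * k) = (5 / 6) powr (8.317 :: real)"
    unfolding p by (simp add: True)
  also have "\<dots> \<le> (5 / 6) powr real 8"
    by (rule powr_mono') simp_all
  also have "\<dots> < 1 / 4"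
    by (simp add: powr_realpow power_divide)
  finally show ?thesis .
next
  case False
  have p: "0 < collision_bound k" "collision_bound k < 1"
    using collision_bound_pos collision_bound_less_1 assms by auto
  have "(1 - collision_bound k) powr (8.317 * k) \<le> exp (- collision_bound k) powr (8.317 * k)"
    using p by (intro powr_mono2) (auto simp: exp_ge_add_one_self[of "- collision_bound k", simplified])
  also have "\<dots> = exp (- 8.317 * (k * collision_bound k))"
    by (simp add: powr_def mult_ac)
  also have "\<dots> \<le> exp (-1.41)"
    using collision_bound_ge[of k] False assms by simp
  also have "\<dots> < 1 / 4"
    by (rule exp_neg_141_less)
  finally show ?thesis .
qed

lemma power_mult_square_less_1:
  fixes b a :: real and l n :: nat
  assumes "0 < b" "b \<le> 1" "b powr a < 1 / 4" "a * log 2 n \<le> l" "2 \<le> n"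
  shows "b ^ l * real n ^ 2 < 1"
proof -
  have "b ^ l = b powr l"
    using assms(1) by (simp add: powr_realpow)
  also have "\<dots> \<le> b powr (a * log 2 n)"
    using assms by (intro powr_mono') auto
  also have "\<dots> = (b powr a) powr log 2 n"
    by (simp add: powr_powr)
  also have "\<dots> < (1 / 4) powr log 2 n"
    using assms by (intro powr_less_mono2) auto
  also have "(1 / 4 :: real) powr log 2 n = 1 / real n ^ 2"
  proof -
    have quarter: "(1 / 4 :: real) = 2 powr (-2)"
      by (simp add: powr_minus)
    have "(1 / 4 :: real) powr log 2 n = 2 powr (-2 * log 2 n)"
      by (simp only: quarter powr_powr)
    also have "\<dots> = (2 powr log 2 n) powr (-2)"
      by (simp add: powr_powr mult.commute)
    also have "\<dots> = 1 / real n ^ 2"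
      using assms(5) by (simp add: powr_minus_divide powr_realpow)
    finally show ?thesis .
  qed
  finally show ?thesis
    using assms(5) by (simp add: field_simps)
qed

lemma power_collision_bound_mult_card_less_1:
  assumes "1 \<le> k" "finite V" "card V = n" "8.317 * k * log 2 n \<le> l"
    and "P \<subseteq> {(u, v) \<in> V \<times> V. u \<noteq> v}"
  shows "(1 - collision_bound k) ^ l * card P < 1"
proof (cases "P = {}")
  case False
  then obtain a b where "(a, b) \<in> P"
    by auto
  then have "a \<in> V" "b \<in> V" "a \<noteq> b"
    using assms(5) by auto
  then have "2 \<le> n"
    using card_mono[of V "{a, b}"] assms(2,3) by auto
  have "card P \<le> card (V \<times> V)"
    using assms(2,5) by (intro card_mono) auto
  then have "real (card P) \<le> real n ^ 2"
    using assms(3) by (simp add: card_cartesian_product power2_eq_square flip: of_nat_mult)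
  then have "(1 - collision_bound k) ^ l * card P \<le> (1 - collision_bound k) ^ l * real n ^ 2"
    using collision_bound_less_1[OF assms(1)] by (simp add: mult_left_mono)
  also have "\<dots> < 1"
    using collision_bound_pos[OF assms(1)] collision_bound_less_1[OF assms(1)]
      collision_bound_powr_less[OF assms(1)] assms(4) \<open>2 \<le> n\<close>
    by (intro power_mult_square_less_1[where a="8.317 * k"]) auto
  finally show ?thesis .
qed simp

section \<open>Encodings from colourings\<close>

definition proper_colouring :: "'a set \<Rightarrow> ('a \<Rightarrow> 'a \<Rightarrow> bool) \<Rightarrow> ('a \<Rightarrow> nat) \<Rightarrow> bool" where
  "proper_colouring V E c \<longleftrightarrow> (\<forall>u\<in>V. \<forall>v\<in>V. E u v \<longrightarrow> c u \<noteq> c v)"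

lemma encoding_of_colourings:
  assumes "simple_graph V E" and proper: "\<forall>c\<in>set cs. proper_colouring V E c"
    and cover: "\<forall>u\<in>V. \<forall>v\<in>V. u \<noteq> v \<and> \<not> E u v \<longrightarrow> (\<exists>c\<in>set cs. c u = c v)"
  shows "\<exists>\<phi>. encoding (length cs + 1) V E \<phi>"
proof -
  obtain idx :: "'a \<Rightarrow> nat" where idx: "inj_on idx V"
    using assms(1) finite_imp_inj_to_nat_seg unfolding simple_graph_def by metis
  define \<phi> where "\<phi> v = map (\<lambda>c. c v) cs @ [idx v]" for v
  have nth_\<phi>: "\<phi> v ! i = (if i < length cs then (cs ! i) v else idx v)" if "i < length cs + 1" for v i
    using that by (auto simp: \<phi>_def nth_append)
  have "E u v \<longleftrightarrow> (\<forall>i<length cs + 1. \<phi> u ! i \<noteq> \<phi> v ! i)"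
    if uv: "u \<in> V" "v \<in> V" for u v
  proof
    assume "E u v"
    then have "u \<noteq> v"
      using assms(1) by (auto simp: simple_graph_def)
    then show "\<forall>i<length cs + 1. \<phi> u ! i \<noteq> \<phi> v ! i"
      using proper \<open>E u v\<close> uv idx
      by (auto simp: nth_\<phi> proper_colouring_def inj_on_eq_iff)
  next
    assume differ: "\<forall>i<length cs + 1. \<phi> u ! i \<noteq> \<phi> v ! i"
    show "E u v"
    proof (rule ccontr)
      assume "\<not> E u v"
      moreover have "u \<noteq> v"
        using differ by auto
      ultimately obtain c where "c \<in> set cs" "c u = c v"
        using cover uv by blast
      then obtain i where "i < length cs" "(cs ! i) u = (cs ! i) v"
        by (auto simp: in_set_conv_nth)
      then have "\<phi> u ! i = \<phi> v ! i"
        by (simp add: nth_\<phi>)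
      with differ \<open>i < length cs\<close> show False
        by simp
    qed
  qed
  moreover have "inj_on \<phi> V"
    using idx by (auto simp: \<phi>_def inj_on_def)
  ultimately have "encoding (length cs + 1) V E \<phi>"
    by (simp add: encoding_def \<phi>_def)
  then show ?thesis
    by blast
qed

lemma exists_covering_proper_colourings:
  assumes "simple_graph V E" "1 \<le> k" "degenerate k V E" "card V = n"
    and "8.317 * k * log 2 n \<le> l"
  shows "\<exists>cs. length cs = l \<and> (\<forall>c\<in>set cs. proper_colouring V E c) \<and>
           (\<forall>u\<in>V. \<forall>v\<in>V. u \<noteq> v \<and> \<not> E u v \<longrightarrow> (\<exists>c\<in>set cs. c u = c v))"
proof -
  have "finite V" and "\<And>u v. E u v \<Longrightarrow> E v u" and "\<And>v. \<not> E v v"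
    using assms(1) by (auto simp: simple_graph_def)
  then interpret greedy_colouring E k "num_colours k"
    using num_colours_gt[OF assms(2)] by unfold_locales auto
  obtain ws where ws: "set ws = V" "degenerate_list k E ws"
    using degenerate_imp_degenerate_list[OF assms(3)] .
  define p where "p = collision_bound k"
  define P where "P = {(u, v) \<in> V \<times> V. u \<noteq> v \<and> \<not> E u v}"
  have finite_P: "finite P"
    using \<open>finite V\<close> by (auto simp: P_def intro: finite_subset[of _ "V \<times> V"])
  have collision: "p \<le> measure_pmf.prob (random_colouring ws) {c. c (fst x) = c (snd x)}"
    if "x \<in> P" for x
    using that ws collision_prob_ge[of ws "fst x" "snd x"]
    by (auto simp: P_def p_def collision_bound_def)
  have "p \<le> 1"
    using collision_bound_less_1[OF assms(2)] by (simp add: p_def)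
  obtain cs where cs: "length cs = l" "set cs \<subseteq> set_pmf (random_colouring ws)"
    and uncovered: "card {x\<in>P. \<forall>c\<in>set cs. c \<notin> {c. c (fst x) = c (snd x)}} \<le> (1 - p) ^ l * card P"
    using exists_samples_few_failures[where A="\<lambda>x. {c. c (fst x) = c (snd x)}" and t=l,
        OF finite_P collision \<open>p \<le> 1\<close>]
    by auto
  have "(1 - p) ^ l * card P < 1"
    unfolding p_def using assms(2,4,5) \<open>finite V\<close>
    by (intro power_collision_bound_mult_card_less_1) (auto simp: P_def)
  with uncovered have "card {x\<in>P. \<forall>c\<in>set cs. c (fst x) \<noteq> c (snd x)} = 0"
    by simp
  with finite_P have "{x\<in>P. \<forall>c\<in>set cs. c (fst x) \<noteq> c (snd x)} = {}"
    by simp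
  moreover have "proper_colouring V E c" if "c \<in> set cs" for c
    using that cs(2) ws random_colouring_proper by (auto simp: proper_colouring_def)
  ultimately show ?thesis
    using cs(1) by (auto simp: P_def)
qed

theorem theorem3:
  fixes V :: "'a set" and E :: "'a \<Rightarrow> 'a \<Rightarrow> bool" and k n :: nat
  assumes "simple_graph V E"
    and "k \<ge> 1"
    and "degenerate k V E"
    and "card V = n" and "n \<ge> 1"
  shows "int (pdim V E) \<le> \<lceil>8.317 * real k * log 2 (real n)\<rceil> + 1"
proof -
  define l where "l = nat \<lceil>8.317 * real k * log 2 (real n)\<rceil>"
  have "0 \<le> 8.317 * real k * log 2 (real n)"
    using assms(5) by simp
  then have l: "int l = \<lceil>8.317 * real k * log 2 (real n)\<rceil>" "8.317 * real k * log 2 (real n) \<le> l"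
    unfolding l_def by (simp_all add: of_nat_nat)
  obtain cs where cs: "length cs = l" "\<forall>c\<in>set cs. proper_colouring V E c"
    "\<forall>u\<in>V. \<forall>v\<in>V. u \<noteq> v \<and> \<not> E u v \<longrightarrow> (\<exists>c\<in>set cs. c u = c v)"
    using exists_covering_proper_colourings[OF assms(1-4) l(2)] by metis
  have "\<exists>\<phi>. encoding (l + 1) V E \<phi>"
    using encoding_of_colourings[OF assms(1) cs(2,3)] unfolding cs(1) .
  then have "pdim V E \<le> l + 1"
    unfolding pdim_def by (rule Least_le)
  then show ?thesis
    using l(1) by simp
qed

end
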